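(* Fix a server $\mathrm{SP}_i$, a finite horizon $T$, a privacy budget $\varepsilon>0$ and a positive integer $T_s$ (the maximum number of sampling timestamps). Let $S=(D_{i,1},\dots,D_{i,T})$ be the finite stream of crowd-sourced databases held by $\mathrm{SP}_i$, and let $f$ be an aggregate function with sensitivity $\Delta f$ (with respect to adding/removing/changing one user's record in a single database $D_{i,t}$). The algorithm DPCrowd, run at $\mathrm{SP}_i$ as described in the context, satisfies user-level $\varepsilon$-differential privacy for the users registered at $\mathrm{SP}_i$ over the finite stream of length $T$: for every pair of streams $S,S'$ that differ only in the records of a single user (at any subset of the $T$ timestamps) and for every measurable set $O$ of possible output sequences, $$\Pr[\mathrm{DPCrowd}(S)\in O]\le e^{\varepsilon}\Pr[\mathrm{DPCrowd}(S')\in O].$$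
   Context: Setting: $m$ servers in a decentralized (time-varying) communication network; server $\mathrm{SP}_i$ holds at each timestamp $t$ a database $D_{i,t}$ with one row per user registered at $\mathrm{SP}_i$ at time $t$ (each row is a 0/1 vector over $d$ regions with at most one 1), and computes the aggregate $x_i(t)=f(D_{i,t})$ (e.g. the number of its users in a given region, for which $\Delta f=1$). The sensitivity is $\Delta f=\max\|f(D)-f(D')\|_1$ over databases $D,D'$ differing in one record. $\mathrm{Lap}(b)$ denotes the zero-mean Laplace distribution with density $\frac{1}{2b}e^{-|v|/b}$. Algorithm DPCrowd at $\mathrm{SP}_i$: for $t=1,\dots,T$, compute $x_i(t)=f(D_{i,t})$. If $t$ is a sampling point (the sampling decision is made by an adaptive rule that depends only on quantities the algorithm previously released/computed from noisy values) and fewer than $T_s$ sampling points have been used so far, then release $z_i(t)=x_i(t)+\upsilon_i(t)$ with fresh independent noise $\upsilon_i(t)\sim\mathrm{Lap}(\Delta f\cdot T_s/\varepsilon)$, increment the sample counter, and compute from $z_i(t)$, the previous estimates, and messages received from one-hop neighboring servers (Kalman-consensus information filter prediction/update, message broadcast, and sampling-rate adjustment) the released estimate $r_i(t)$. Otherwise set $z_i(t)=r_i(t-1)$, broadcast nothing, and compute $r_i(t)$ from previous estimates and neighbors' messages via the filter update. Thus the only step accessing the true aggregates $x_i(t)$ is the Laplace perturbation at at most $T_s$ sampling timestamps; all other computations (including the outputs, which are the released estimates and broadcast messages) are functions of the noisy values and of information (neighbors' messages) not depending on $\mathrm{SP}_i$'s stream. User-level DP means neighboring streams differ in all events of one user.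 *)

theory Defs
  imports "HOL-Probability.Probability"
begin

text \<open>A database held by a server maps each user to its record (None = user not
registered at that time).  A database has finitely many registered users.\<close>

type_synonym ('u, 'r) db = "'u \<Rightarrow> 'r option"

definition valid_db :: "('u, 'r) db \<Rightarrow> bool" where
  "valid_db D \<longleftrightarrow> finite {u. D u \<noteq> None}"

definition db_neighbors :: "('u, 'r) db \<Rightarrow> ('u, 'r) db \<Rightarrow> bool" where
  "db_neighbors D D' \<longleftrightarrow> valid_db D \<and> valid_db D' \<and>
     (\<exists>u. \<forall>v. v \<noteq> u \<longrightarrow> D v = D' v)"

definition sensitivity :: "(('u, 'r) db \<Rightarrow> real) \<Rightarrow> real" where
  "sensitivity f = Sup {\<bar>f D - f D'\<bar> | D D'. db_neighbors D D'}"

definition valid_stream :: "nat \<Rightarrow> (nat \<Rightarrow> ('u, 'r) db) \<Rightarrow> bool" where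
  "valid_stream T S \<longleftrightarrow> (\<forall>t\<in>{1..T}. valid_db (S t))"

definition user_neighbors ::
  "nat \<Rightarrow> (nat \<Rightarrow> ('u, 'r) db) \<Rightarrow> (nat \<Rightarrow> ('u, 'r) db) \<Rightarrow> bool" where
  "user_neighbors T S S' \<longleftrightarrow> valid_stream T S \<and> valid_stream T S' \<and>
     (\<exists>u. \<forall>t\<in>{1..T}. \<forall>v. v \<noteq> u \<longrightarrow> S t v = S' t v)"

definition laplace_density :: "real \<Rightarrow> real \<Rightarrow> real" where
  "laplace_density b v = exp (- \<bar>v\<bar> / b) / (2 * b)"

definition laplace :: "real \<Rightarrow> real measure" where
  "laplace b = density lborel (\<lambda>v. ennreal (laplace_density b v))"

text \<open>Fresh independent noise: one independent Laplace variable per timestamp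
1..T (the variable of timestamp t is used only if t is a sampling point, so this is
distributionally the same as drawing fresh noise at each sampling point).\<close>

definition noise_space :: "nat \<Rightarrow> real \<Rightarrow> (nat \<Rightarrow> real) measure" where
  "noise_space T b = PiM {1..T} (\<lambda>_. laplace b)"

text \<open>Abstract internal state 's (filter estimates, previous outputs, sampling
rate, ...).  Neighbours' messages do not depend on the server's stream and are
therefore fixed exogenous inputs; they are absorbed in the time-dependence of
the update functions.
  \<^item> samp t s: adaptive sampling rule at time t, from the current state;
  \<^item> upd_s t s z: prediction/update, broadcast, sampling-rate adjustment from the
    noisy value z = x(t) + noise;
  \<^item> upd_n t s: filter update when t is not used as a sampling point;
  \<^item> outp s: the released quantities (estimate r(t) and broadcast message).\<close>

fun dpcrowd_state ::
  "(nat \<Rightarrow> 's \<Rightarrow> bool) \<Rightarrow> (nat \<Rightarrow> 's \<Rightarrow> real \<Rightarrow> 's) \<Rightarrow> (nat \<Rightarrow> 's \<Rightarrow> 's) \<Rightarrow> 's \<Rightarrow>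
   nat \<Rightarrow> (('u, 'r) db \<Rightarrow> real) \<Rightarrow> (nat \<Rightarrow> ('u, 'r) db) \<Rightarrow> (nat \<Rightarrow> real) \<Rightarrow> nat \<Rightarrow> 's \<times> nat"
where
  "dpcrowd_state samp upd_s upd_n s0 Ts f S \<upsilon> 0 = (s0, 0)"
| "dpcrowd_state samp upd_s upd_n s0 Ts f S \<upsilon> (Suc t) =
     (let (s, c) = dpcrowd_state samp upd_s upd_n s0 Ts f S \<upsilon> t in
      if samp (Suc t) s \<and> c < Ts
      then (upd_s (Suc t) s (f (S (Suc t)) + \<upsilon> (Suc t)), Suc c)
      else (upd_n (Suc t) s, c))"

definition dpcrowd_output ::
  "(nat \<Rightarrow> 's \<Rightarrow> bool) \<Rightarrow> (nat \<Rightarrow> 's \<Rightarrow> real \<Rightarrow> 's) \<Rightarrow> (nat \<Rightarrow> 's \<Rightarrow> 's) \<Rightarrow> 's \<Rightarrow>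
   ('s \<Rightarrow> 'o) \<Rightarrow> nat \<Rightarrow> nat \<Rightarrow> (('u, 'r) db \<Rightarrow> real) \<Rightarrow> (nat \<Rightarrow> ('u, 'r) db) \<Rightarrow>
   (nat \<Rightarrow> real) \<Rightarrow> nat \<Rightarrow> 'o"
where
  "dpcrowd_output samp upd_s upd_n s0 outp T Ts f S \<upsilon> =
     (\<lambda>t\<in>{1..T}. outp (fst (dpcrowd_state samp upd_s upd_n s0 Ts f S \<upsilon> t)))"

definition dpcrowd_prob ::
  "(nat \<Rightarrow> 's \<Rightarrow> bool) \<Rightarrow> (nat \<Rightarrow> 's \<Rightarrow> real \<Rightarrow> 's) \<Rightarrow> (nat \<Rightarrow> 's \<Rightarrow> 's) \<Rightarrow> 's \<Rightarrow>
   ('s \<Rightarrow> 'o) \<Rightarrow> nat \<Rightarrow> nat \<Rightarrow> real \<Rightarrow> real \<Rightarrow> (('u, 'r) db \<Rightarrow> real) \<Rightarrow>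
   (nat \<Rightarrow> ('u, 'r) db) \<Rightarrow> (nat \<Rightarrow> 'o) set \<Rightarrow> real"
where
  "dpcrowd_prob samp upd_s upd_n s0 outp T Ts \<epsilon> \<Delta>f f S Ev =
     measure (noise_space T (\<Delta>f * real Ts / \<epsilon>))
       {\<upsilon> \<in> space (noise_space T (\<Delta>f * real Ts / \<epsilon>)).
          dpcrowd_output samp upd_s upd_n s0 outp T Ts f S \<upsilon> \<in> Ev}"

end

theory Submission
  imports Defs
begin

(* Couple the noise of the two runs: given the noise v of the run on S, shift the noise of
   timestamp t by d_t(v) = f(S t) - f(S' t) if t is a sampling point of the run on S, and by 0
   otherwise.  Since d_t depends only on v_1, ..., v_(t-1), the run on S' with the shifted noise
   passes through exactly the same states as the run on S, and the shift is a triangular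
   translation of R^T, which preserves Lebesgue measure.  At each timestamp the Laplace density
   changes by at most the factor exp(|d_t| / b); at most Ts timestamps are sampling points and
   |d_t| <= Delta f there, so the densities differ by at most exp(Ts Delta f / b) = exp eps. *)

lemma laplace_density_nonneg: "0 < b \<Longrightarrow> 0 \<le> laplace_density b v"
  by (simp add: laplace_density_def)

lemma borel_measurable_laplace_density[measurable]: "laplace_density b \<in> borel_measurable borel"
  unfolding laplace_density_def by measurable

lemma prob_space_laplace:
  assumes b: "0 < b"
  shows "prob_space (laplace b)"
proof (rule prob_spaceI)
  define e where "e = exponential_density (1 / b)"
  have e_nonneg: "0 \<le> e v" for v
    unfolding e_def using b by (simp add: exponential_density_nonneg)
  have e_integral: "(\<integral>\<^sup>+v. ennreal (e v) \<partial>lborel) = 1"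
  proof -
    interpret prob_space "density lborel (\<lambda>v. ennreal (e v))"
      unfolding e_def using b by (intro prob_space_exponential_density) simp
    show ?thesis
      using emeasure_space_1 by (simp add: emeasure_density e_def)
  qed
  have e_reflected_integral: "(\<integral>\<^sup>+v. ennreal (e (- v)) \<partial>lborel) = 1"
    using nn_integral_real_affine[of "\<lambda>v. ennreal (e v)" "-1" 0] e_integral by (simp add: e_def)
  have e_measurable[measurable]: "e \<in> borel_measurable borel"
    by (simp add: e_def)
  \<comment> \<open>Away from \<open>0\<close>, the Laplace density is the average of the exponential density
      and its reflection.\<close>
  have "AE v in lborel. ennreal (laplace_density b v) = ennreal (1 / 2) * (ennreal (e v) + ennreal (e (- v)))"
    using AE_lborel_singleton[of 0]
  proof eventually_elim
    case (elim v)
    then have "laplace_density b v = 1 / 2 * (e v + e (- v))"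
      unfolding e_def exponential_density_def laplace_density_def using b
      by (auto simp: field_simps abs_if)
    then show ?case
      unfolding \<open>laplace_density b v = _\<close> using e_nonneg by (subst ennreal_mult) simp_all
  qed
  then have "(\<integral>\<^sup>+v. ennreal (laplace_density b v) \<partial>lborel)
      = ennreal (1 / 2) * ((\<integral>\<^sup>+v. ennreal (e v) \<partial>lborel) + (\<integral>\<^sup>+v. ennreal (e (- v)) \<partial>lborel))"
    by (simp add: nn_integral_cong_AE nn_integral_cmult nn_integral_add)
  also have "\<dots> = 1"
    using e_integral e_reflected_integral by (simp add: mult.commute[of "inverse 2"] flip: divide_ennreal_def)
  finally show "emeasure (laplace b) (space (laplace b)) = 1"
    unfolding laplace_def by (simp add: emeasure_density)
qed

lemma laplace_density_le_shift:
  assumes b: "0 < b"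
  shows "laplace_density b v \<le> exp (\<bar>d\<bar> / b) * laplace_density b (v + d)"
proof -
  have "- \<bar>v\<bar> \<le> \<bar>d\<bar> - \<bar>v + d\<bar>"
    by linarith
  then have "- \<bar>v\<bar> / b \<le> (\<bar>d\<bar> - \<bar>v + d\<bar>) / b"
    using b by (intro divide_right_mono) auto
  then have "exp (- \<bar>v\<bar> / b) \<le> exp (\<bar>d\<bar> / b) * exp (- \<bar>v + d\<bar> / b)"
    by (simp add: diff_divide_distrib flip: exp_add)
  then show ?thesis
    using b unfolding laplace_density_def by (simp add: divide_right_mono)
qed

lemma prod_laplace_density_le_shift:
  assumes b: "0 < b" and I: "finite I"
  shows "(\<Prod>i\<in>I. laplace_density b (v i))
    \<le> exp ((\<Sum>i\<in>I. \<bar>d i\<bar>) / b) * (\<Prod>i\<in>I. laplace_density b (v i + d i))"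
proof -
  have "(\<Prod>i\<in>I. laplace_density b (v i)) \<le> (\<Prod>i\<in>I. exp (\<bar>d i\<bar> / b) * laplace_density b (v i + d i))"
    using b by (intro prod_mono) (simp add: laplace_density_nonneg laplace_density_le_shift)
  then show ?thesis
    using I by (simp add: prod.distrib exp_sum sum_divide_distrib)
qed

lemma nn_integral_PiM_density:
  fixes M :: "'a measure" and p :: "'a \<Rightarrow> ennreal" and I :: "'i set"
  assumes I: "finite I"
    and M: "sigma_finite_measure M"
    and p[measurable]: "p \<in> borel_measurable M"
    and Mp: "sigma_finite_measure (density M p)"
    and g: "g \<in> borel_measurable (PiM I (\<lambda>_. M))"
  shows "(\<integral>\<^sup>+x. g x \<partial>PiM I (\<lambda>_. density M p)) = (\<integral>\<^sup>+x. (\<Prod>i\<in>I. p (x i)) * g x \<partial>PiM I (\<lambda>_. M))"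
  using I g
proof (induction I arbitrary: g rule: finite_induct)
  case empty
  then show ?case
    by (simp add: PiM_empty)
next
  case (insert i I)
  interpret M: product_sigma_finite "\<lambda>_::'i. M"
    using M by (simp add: product_sigma_finite_def)
  interpret Mp: product_sigma_finite "\<lambda>_::'i. density M p"
    using Mp by (simp add: product_sigma_finite_def)
  have g[measurable]: "g \<in> borel_measurable (PiM (insert i I) (\<lambda>_. M))"
    by fact
  have sets_PiM_density: "sets (PiM J (\<lambda>_. density M p)) = sets (PiM J (\<lambda>_. M))" for J :: "'i set"
    by (intro sets_PiM_cong) auto
  have "(\<integral>\<^sup>+x. g x \<partial>PiM (insert i I) (\<lambda>_. density M p))
      = (\<integral>\<^sup>+x. (\<integral>\<^sup>+y. g (x(i := y)) \<partial>density M p) \<partial>PiM I (\<lambda>_. density M p))"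
    using insert.hyps g
    by (intro Mp.product_nn_integral_insert) (simp_all add: measurable_cong_sets[OF sets_PiM_density refl])
  also have "\<dots> = (\<integral>\<^sup>+x. (\<integral>\<^sup>+y. p y * g (x(i := y)) \<partial>M) \<partial>PiM I (\<lambda>_. density M p))"
    by (intro nn_integral_cong, subst nn_integral_density) (auto simp: space_PiM)
  also have "\<dots> = (\<integral>\<^sup>+x. (\<Prod>j\<in>I. p (x j)) * (\<integral>\<^sup>+y. p y * g (x(i := y)) \<partial>M) \<partial>PiM I (\<lambda>_. M))"
    by (rule insert.IH) measurable
  also have "\<dots> = (\<integral>\<^sup>+x. (\<integral>\<^sup>+y. (\<Prod>j\<in>insert i I. p ((x(i := y)) j)) * g (x(i := y)) \<partial>M) \<partial>PiM I (\<lambda>_. M))"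
  proof (rule nn_integral_cong)
    fix x assume x: "x \<in> space (PiM I (\<lambda>_. M))"
    have [measurable]: "(\<lambda>y. g (x(i := y))) \<in> borel_measurable M"
      using measurable_comp[OF measurable_component_update[OF x insert.hyps(2)] g] by (simp add: comp_def)
    have "(\<Prod>j\<in>insert i I. p ((x(i := y)) j)) = p y * (\<Prod>j\<in>I. p (x j))" for y
      using insert.hyps by (auto intro!: arg_cong[where f = "(*) (p y)"] prod.cong)
    then show "(\<Prod>j\<in>I. p (x j)) * (\<integral>\<^sup>+y. p y * g (x(i := y)) \<partial>M)
        = (\<integral>\<^sup>+y. (\<Prod>j\<in>insert i I. p ((x(i := y)) j)) * g (x(i := y)) \<partial>M)"
      by (subst nn_integral_cmult[symmetric]) (simp_all add: ac_simps)
  qed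
  also have "\<dots> = (\<integral>\<^sup>+x. (\<Prod>j\<in>insert i I. p (x j)) * g x \<partial>PiM (insert i I) (\<lambda>_. M))"
    using insert.hyps by (intro M.product_nn_integral_insert[symmetric]) measurable
  finally show ?case .
qed

lemma PiM_density:
  fixes M :: "'a measure" and p :: "'a \<Rightarrow> ennreal" and I :: "'i set"
  assumes I: "finite I"
    and M: "sigma_finite_measure M"
    and p[measurable]: "p \<in> borel_measurable M"
    and Mp: "sigma_finite_measure (density M p)"
  shows "PiM I (\<lambda>_. density M p) = density (PiM I (\<lambda>_. M)) (\<lambda>x. \<Prod>i\<in>I. p (x i))"
proof (rule measure_eqI)
  have sets_eq: "sets (PiM I (\<lambda>_. density M p)) = sets (PiM I (\<lambda>_. M))"
    by (intro sets_PiM_cong) simp_all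
  then show "sets (PiM I (\<lambda>_. density M p)) = sets (density (PiM I (\<lambda>_. M)) (\<lambda>x. \<Prod>i\<in>I. p (x i)))"
    by (simp only: sets_density)
  fix A assume "A \<in> sets (PiM I (\<lambda>_. density M p))"
  then have A[measurable]: "A \<in> sets (PiM I (\<lambda>_. M))"
    by (simp only: sets_eq)
  have "emeasure (PiM I (\<lambda>_. density M p)) A = (\<integral>\<^sup>+x. indicator A x \<partial>PiM I (\<lambda>_. density M p))"
    using \<open>A \<in> sets (PiM I (\<lambda>_. density M p))\<close> by (rule nn_integral_indicator[symmetric])
  also have "\<dots> = (\<integral>\<^sup>+x. (\<Prod>i\<in>I. p (x i)) * indicator A x \<partial>PiM I (\<lambda>_. M))"
    by (intro nn_integral_PiM_density[OF I M p Mp]) measurable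
  also have "\<dots> = emeasure (density (PiM I (\<lambda>_. M)) (\<lambda>x. \<Prod>i\<in>I. p (x i))) A"
    by (rule emeasure_density[symmetric]) measurable
  finally show "emeasure (PiM I (\<lambda>_. density M p)) A = emeasure (density (PiM I (\<lambda>_. M)) (\<lambda>x. \<Prod>i\<in>I. p (x i))) A" .
qed

lemma noise_space_eq_density:
  assumes "0 < b"
  shows "noise_space T b
    = density (PiM {1..T} (\<lambda>_. lborel)) (\<lambda>v. \<Prod>t\<in>{1..T}. ennreal (laplace_density b (v t)))"
  using prob_space_imp_sigma_finite[OF prob_space_laplace[OF assms]]
  unfolding noise_space_def laplace_def by (intro PiM_density) (simp_all add: lborel.sigma_finite_measure_axioms)

definition causal_shift :: "(nat \<Rightarrow> (nat \<Rightarrow> real) \<Rightarrow> real) \<Rightarrow> nat \<Rightarrow> (nat \<Rightarrow> real) \<Rightarrow> nat \<Rightarrow> real" where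
  "causal_shift d n x = (\<lambda>t\<in>{1..n}. x t + d t (restrict x {1..<t}))"

lemma measurable_causal_shift:
  assumes d: "\<And>t. d t \<in> borel_measurable (PiM {1..<t} (\<lambda>_. lborel))"
  shows "causal_shift d n \<in> PiM {1..n} (\<lambda>_. lborel) \<rightarrow>\<^sub>M PiM {1..n} (\<lambda>_. lborel)"
  unfolding causal_shift_def
proof (rule measurable_restrict)
  fix t assume t: "t \<in> {1..n}"
  have "(\<lambda>x. restrict x {1..<t}) \<in> PiM {1..n} (\<lambda>_. lborel) \<rightarrow>\<^sub>M PiM {1..<t} (\<lambda>_. lborel :: real measure)"
    using t by (intro measurable_restrict_subset) auto
  from measurable_compose[OF this d]
  have [measurable]: "(\<lambda>x. d t (restrict x {1..<t})) \<in> borel_measurable (PiM {1..n} (\<lambda>_. lborel))" .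
  have "(\<lambda>x. x t + d t (restrict x {1..<t})) \<in> borel_measurable (PiM {1..n} (\<lambda>_. lborel))"
    using t by measurable
  then show "(\<lambda>x. x t + d t (restrict x {1..<t})) \<in> PiM {1..n} (\<lambda>_. lborel) \<rightarrow>\<^sub>M lborel"
    by simp
qed

lemma causal_shift_Suc_fun_upd:
  "causal_shift d (Suc n) (x(Suc n := y)) = (causal_shift d n x)(Suc n := y + d (Suc n) (restrict x {1..n}))"
proof
  fix t
  have "restrict (x(Suc n := y)) {1..<t} = restrict x {1..<t}" if "t \<le> Suc n"
    using that by (auto simp: restrict_def)
  then show "causal_shift d (Suc n) (x(Suc n := y)) t
      = ((causal_shift d n x)(Suc n := y + d (Suc n) (restrict x {1..n}))) t"
    by (auto simp: causal_shift_def atLeastLessThanSuc_atLeastAtMost)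
qed

lemma nn_integral_causal_shift:
  assumes d[measurable]: "\<And>t. d t \<in> borel_measurable (PiM {1..<t} (\<lambda>_. lborel))"
    and g: "g \<in> borel_measurable (PiM {1..n} (\<lambda>_. lborel))"
  shows "(\<integral>\<^sup>+x. g (causal_shift d n x) \<partial>PiM {1..n} (\<lambda>_. lborel)) = (\<integral>\<^sup>+x. g x \<partial>PiM {1..n} (\<lambda>_. lborel))"
  using g
proof (induction n arbitrary: g)
  case 0
  then show ?case
    by (simp add: PiM_empty causal_shift_def nn_integral_count_space_finite)
next
  case (Suc n)
  interpret lborel: product_sigma_finite "\<lambda>_::nat. lborel :: real measure"
    by standard
  let ?P = "\<lambda>n. PiM {1..n} (\<lambda>_. lborel :: real measure)"
  have split: "{1..Suc n} = insert (Suc n) {1..n}" and fresh: "Suc n \<notin> {1..n}"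
    by auto
  have g[measurable]: "g \<in> borel_measurable (PiM (insert (Suc n) {1..n}) (\<lambda>_. lborel))"
    using Suc.prems unfolding split .
  have shift_n[measurable]: "causal_shift d n \<in> ?P n \<rightarrow>\<^sub>M ?P n"
    by (rule measurable_causal_shift[OF d])
  have "(\<lambda>x. g (causal_shift d (Suc n) x)) \<in> borel_measurable (?P (Suc n))"
    using measurable_causal_shift[OF d, of "Suc n"] Suc.prems by measurable
  then have "(\<integral>\<^sup>+x. g (causal_shift d (Suc n) x) \<partial>?P (Suc n))
      = (\<integral>\<^sup>+x. (\<integral>\<^sup>+y. g (causal_shift d (Suc n) (x(Suc n := y))) \<partial>lborel) \<partial>?P n)"
    unfolding split by (intro lborel.product_nn_integral_insert fresh) simp_all
  also have "\<dots> = (\<integral>\<^sup>+x. (\<integral>\<^sup>+y. g ((causal_shift d n x)(Suc n := y)) \<partial>lborel) \<partial>?P n)"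
  proof (rule nn_integral_cong)
    fix x assume "x \<in> space (?P n)"
    then have "causal_shift d n x \<in> space (?P n)"
      by (rule measurable_space[OF shift_n])
    then have "(\<lambda>y. g ((causal_shift d n x)(Suc n := y))) \<in> borel_measurable borel"
      using measurable_comp[OF measurable_component_update[OF _ fresh] g] by (simp add: comp_def)
    from nn_integral_real_affine[OF this, of 1 "d (Suc n) (restrict x {1..n})"]
    show "(\<integral>\<^sup>+y. g (causal_shift d (Suc n) (x(Suc n := y))) \<partial>lborel)
        = (\<integral>\<^sup>+y. g ((causal_shift d n x)(Suc n := y)) \<partial>lborel)"
      by (simp add: causal_shift_Suc_fun_upd add.commute)
  qed
  also have "\<dots> = (\<integral>\<^sup>+x. (\<integral>\<^sup>+y. g (x(Suc n := y)) \<partial>lborel) \<partial>?P n)"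
    by (rule Suc.IH[where g="\<lambda>x. \<integral>\<^sup>+y. g (x(Suc n := y)) \<partial>lborel"]) measurable
  also have "\<dots> = (\<integral>\<^sup>+x. g x \<partial>?P (Suc n))"
    unfolding split by (intro lborel.product_nn_integral_insert[symmetric] fresh g) simp
  finally show ?case .
qed

lemma emeasure_density_le_by_coupling:
  assumes \<phi>[measurable]: "\<phi> \<in> M \<rightarrow>\<^sub>M M"
    and preserving: "\<And>g. g \<in> borel_measurable M \<Longrightarrow> (\<integral>\<^sup>+x. g (\<phi> x) \<partial>M) = (\<integral>\<^sup>+x. g x \<partial>M)"
    and p[measurable]: "p \<in> borel_measurable M"
    and ratio: "\<And>x. x \<in> space M \<Longrightarrow> p x \<le> c * p (\<phi> x)"
    and A[measurable]: "A \<in> sets M"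
  shows "emeasure (density M p) (\<phi> -` A \<inter> space M) \<le> c * emeasure (density M p) A"
proof -
  have "emeasure (density M p) (\<phi> -` A \<inter> space M) = (\<integral>\<^sup>+x. p x * indicator A (\<phi> x) \<partial>M)"
    by (subst emeasure_density) (auto intro!: nn_integral_cong split: split_indicator)
  also have "\<dots> \<le> (\<integral>\<^sup>+x. c * (p (\<phi> x) * indicator A (\<phi> x)) \<partial>M)"
    by (intro nn_integral_mono) (auto simp: ratio split: split_indicator)
  also have "\<dots> = c * (\<integral>\<^sup>+x. p (\<phi> x) * indicator A (\<phi> x) \<partial>M)"
    by (intro nn_integral_cmult) measurable
  also have "(\<integral>\<^sup>+x. p (\<phi> x) * indicator A (\<phi> x) \<partial>M) = emeasure (density M p) A"
    by (subst preserving) (simp_all add: emeasure_density)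
  finally show ?thesis .
qed

lemma measure_density_le_by_coupling:
  assumes "\<phi> \<in> M \<rightarrow>\<^sub>M M"
    and "\<And>g. g \<in> borel_measurable M \<Longrightarrow> (\<integral>\<^sup>+x. g (\<phi> x) \<partial>M) = (\<integral>\<^sup>+x. g x \<partial>M)"
    and "p \<in> borel_measurable M"
    and "\<And>x. x \<in> space M \<Longrightarrow> p x \<le> ennreal c * p (\<phi> x)"
    and "A \<in> sets M"
    and c: "0 \<le> c"
    and finite: "finite_measure (density M p)"
  shows "measure (density M p) (\<phi> -` A \<inter> space M) \<le> c * measure (density M p) A"
proof -
  have "emeasure (density M p) (\<phi> -` A \<inter> space M) \<le> ennreal c * emeasure (density M p) A"
    by (rule emeasure_density_le_by_coupling) fact+
  also have "\<dots> = ennreal (c * measure (density M p) A)"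
    using c finite by (simp add: finite_measure.emeasure_eq_measure ennreal_mult)
  finally show ?thesis
    using c finite by (simp add: finite_measure.emeasure_eq_measure)
qed

lemma measure_noise_space_causal_shift_le:
  assumes b: "0 < b"
    and d: "\<And>t. d t \<in> borel_measurable (PiM {1..<t} (\<lambda>_. lborel))"
    and ratio: "\<And>v. (\<Prod>t\<in>{1..T}. ennreal (laplace_density b (v t)))
      \<le> ennreal c * (\<Prod>t\<in>{1..T}. ennreal (laplace_density b (causal_shift d T v t)))"
    and c: "0 \<le> c"
    and A: "A \<in> sets (PiM {1..T} (\<lambda>_. lborel))"
  shows "measure (noise_space T b) (causal_shift d T -` A \<inter> space (noise_space T b))
    \<le> c * measure (noise_space T b) A"
proof -
  have "finite_measure (noise_space T b)"
    unfolding noise_space_def using b by (intro prob_space.axioms(1) prob_space_PiM prob_space_laplace)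
  then show ?thesis
    unfolding noise_space_eq_density[OF b] space_density
    using measurable_causal_shift[OF d] nn_integral_causal_shift[OF d] ratio c A
    by (intro measure_density_le_by_coupling) auto
qed

context
  fixes samp :: "nat \<Rightarrow> 's \<Rightarrow> bool" and upd_s :: "nat \<Rightarrow> 's \<Rightarrow> real \<Rightarrow> 's"
    and upd_n :: "nat \<Rightarrow> 's \<Rightarrow> 's" and s0 :: 's and Ts :: nat
    and f :: "('u, 'r) db \<Rightarrow> real"
begin

abbreviation state :: "(nat \<Rightarrow> ('u, 'r) db) \<Rightarrow> (nat \<Rightarrow> real) \<Rightarrow> nat \<Rightarrow> 's \<times> nat" where
  "state \<equiv> dpcrowd_state samp upd_s upd_n s0 Ts f"

definition sampling_point :: "nat \<Rightarrow> 's \<times> nat \<Rightarrow> bool" where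
  "sampling_point t sc \<longleftrightarrow> samp t (fst sc) \<and> snd sc < Ts"

definition dpcrowd_step :: "nat \<Rightarrow> real \<Rightarrow> ('s \<times> nat) \<times> real \<Rightarrow> 's \<times> nat" where
  "dpcrowd_step t x scz = (if sampling_point t (fst scz)
     then (upd_s t (fst (fst scz)) (x + snd scz), Suc (snd (fst scz)))
     else (upd_n t (fst (fst scz)), snd (fst scz)))"

lemma dpcrowd_state_Suc: "state S v (Suc t) = dpcrowd_step (Suc t) (f (S (Suc t))) (state S v t, v (Suc t))"
  by (simp add: dpcrowd_step_def sampling_point_def split: prod.splits)

declare dpcrowd_state.simps(2) [simp del]

lemma dpcrowd_state_cong: "(\<And>j. j \<in> {1..k} \<Longrightarrow> v j = v' j) \<Longrightarrow> state S v k = state S v' k"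
  by (induction k) (simp_all add: dpcrowd_state_Suc)

lemma dpcrowd_state_counter_le: "snd (state S v k) \<le> Ts"
  by (induction k) (auto simp: dpcrowd_state_Suc dpcrowd_step_def sampling_point_def)

text \<open>The offset that, added to the noise of step \<open>t\<close>, makes the run on \<open>S'\<close> release exactly
  the noisy value of the run on \<open>S\<close>.\<close>

definition dpcrowd_correction ::
  "(nat \<Rightarrow> ('u, 'r) db) \<Rightarrow> (nat \<Rightarrow> ('u, 'r) db) \<Rightarrow> nat \<Rightarrow> (nat \<Rightarrow> real) \<Rightarrow> real" where
  "dpcrowd_correction S S' t v =
     (if sampling_point t (state S v (t - 1)) then f (S t) - f (S' t) else 0)"

lemma dpcrowd_correction_restrict:
  "dpcrowd_correction S S' t (restrict v {1..<t}) = dpcrowd_correction S S' t v"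
proof -
  have "state S (restrict v {1..<t}) (t - 1) = state S v (t - 1)"
    by (rule dpcrowd_state_cong) auto
  then show ?thesis
    by (simp add: dpcrowd_correction_def)
qed

lemma causal_shift_dpcrowd_correction:
  "t \<in> {1..T} \<Longrightarrow> causal_shift (dpcrowd_correction S S') T v t = v t + dpcrowd_correction S S' t v"
  unfolding causal_shift_def dpcrowd_correction_restrict by simp

lemma dpcrowd_state_causal_shift:
  "k \<le> T \<Longrightarrow> state S v k = state S' (causal_shift (dpcrowd_correction S S') T v) k"
proof (induction k)
  case 0
  then show ?case by simp
next
  case (Suc k)
  let ?w = "causal_shift (dpcrowd_correction S S') T v"
  have IH: "state S v k = state S' ?w k"
    using Suc by simp
  have w: "?w (Suc k)
      = v (Suc k) + (if sampling_point (Suc k) (state S v k) then f (S (Suc k)) - f (S' (Suc k)) else 0)"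
    using Suc.prems by (simp add: causal_shift_dpcrowd_correction dpcrowd_correction_def)
  show ?case
    unfolding dpcrowd_state_Suc w IH[symmetric] by (simp add: dpcrowd_step_def add.commute)
qed

lemma dpcrowd_output_causal_shift:
  "dpcrowd_output samp upd_s upd_n s0 outp T Ts f S v
     = dpcrowd_output samp upd_s upd_n s0 outp T Ts f S' (causal_shift (dpcrowd_correction S S') T v)"
  unfolding dpcrowd_output_def using dpcrowd_state_causal_shift by (intro restrict_ext) simp

lemma sum_abs_dpcrowd_correction_le_counter:
  assumes "\<And>t. t \<in> {1..k} \<Longrightarrow> \<bar>f (S t) - f (S' t)\<bar> \<le> \<Delta>"
  shows "(\<Sum>t\<in>{1..k}. \<bar>dpcrowd_correction S S' t v\<bar>) \<le> \<Delta> * real (snd (state S v k))"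
  using assms
proof (induction k)
  case 0
  then show ?case by simp
next
  case (Suc k)
  then have IH: "(\<Sum>t\<in>{1..k}. \<bar>dpcrowd_correction S S' t v\<bar>) \<le> \<Delta> * real (snd (state S v k))"
    and diff: "\<bar>f (S (Suc k)) - f (S' (Suc k))\<bar> \<le> \<Delta>"
    by simp_all
  show ?case
    using IH diff
    by (cases "sampling_point (Suc k) (state S v k)")
      (simp_all add: dpcrowd_state_Suc dpcrowd_step_def dpcrowd_correction_def algebra_simps)
qed

lemma sum_abs_dpcrowd_correction_le:
  assumes "\<And>t. t \<in> {1..T} \<Longrightarrow> \<bar>f (S t) - f (S' t)\<bar> \<le> \<Delta>" and "0 \<le> \<Delta>"
  shows "(\<Sum>t\<in>{1..T}. \<bar>dpcrowd_correction S S' t v\<bar>) \<le> \<Delta> * real Ts"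
proof -
  have "\<Delta> * real (snd (state S v T)) \<le> \<Delta> * real Ts"
    using assms(2) dpcrowd_state_counter_le by (intro mult_left_mono) auto
  with sum_abs_dpcrowd_correction_le_counter[OF assms(1)] show ?thesis
    by (rule order.trans)
qed

lemma prod_laplace_density_le_causal_shift:
  assumes "\<And>t. t \<in> {1..T} \<Longrightarrow> \<bar>f (S t) - f (S' t)\<bar> \<le> \<Delta>" and "0 \<le> \<Delta>" and b: "0 < b"
  shows "(\<Prod>t\<in>{1..T}. ennreal (laplace_density b (v t)))
    \<le> ennreal (exp (\<Delta> * real Ts / b))
      * (\<Prod>t\<in>{1..T}. ennreal (laplace_density b (causal_shift (dpcrowd_correction S S') T v t)))"
proof -
  let ?d = "\<lambda>t. dpcrowd_correction S S' t v"
  have "(\<Prod>t\<in>{1..T}. laplace_density b (v t))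
      \<le> exp ((\<Sum>t\<in>{1..T}. \<bar>?d t\<bar>) / b) * (\<Prod>t\<in>{1..T}. laplace_density b (v t + ?d t))"
    using b by (rule prod_laplace_density_le_shift) simp
  also have "\<dots> \<le> exp (\<Delta> * real Ts / b) * (\<Prod>t\<in>{1..T}. laplace_density b (v t + ?d t))"
    using sum_abs_dpcrowd_correction_le[OF assms(1,2)] b
    by (intro mult_right_mono prod_nonneg) (auto simp: divide_right_mono laplace_density_nonneg)
  finally show ?thesis
    using b by (simp add: causal_shift_dpcrowd_correction laplace_density_nonneg prod_nonneg
        ennreal_mult[symmetric] prod_ennreal)
qed

context
  fixes Ms :: "'s measure"
  assumes samp_meas: "\<And>t. {s \<in> space Ms. samp t s} \<in> sets Ms"
    and upd_s_meas: "\<And>t. (\<lambda>(s, z). upd_s t s z) \<in> Ms \<Otimes>\<^sub>M borel \<rightarrow>\<^sub>M Ms"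
    and upd_n_meas: "\<And>t. upd_n t \<in> Ms \<rightarrow>\<^sub>M Ms"
    and s0_space: "s0 \<in> space Ms"
begin

lemma pred_sampling_point[measurable]: "Measurable.pred (Ms \<Otimes>\<^sub>M count_space UNIV) (sampling_point t)"
proof -
  have [measurable]: "Measurable.pred Ms (samp t)"
    using samp_meas by (simp add: Measurable.pred_def)
  have [measurable]: "Measurable.pred (count_space UNIV) (\<lambda>c::nat. c < Ts)"
    by simp
  show ?thesis
    unfolding sampling_point_def by measurable
qed

lemma measurable_dpcrowd_step:
  "dpcrowd_step t x \<in> (Ms \<Otimes>\<^sub>M count_space UNIV) \<Otimes>\<^sub>M borel \<rightarrow>\<^sub>M Ms \<Otimes>\<^sub>M count_space UNIV"
proof -
  note upd_s_meas[measurable] upd_n_meas[measurable]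
  have [measurable]: "Suc \<in> count_space UNIV \<rightarrow>\<^sub>M count_space UNIV"
    by simp
  show ?thesis
    unfolding dpcrowd_step_def by measurable
qed

lemma measurable_dpcrowd_state:
  "{1..k} \<subseteq> K \<Longrightarrow> (\<lambda>v. state S v k) \<in> PiM K (\<lambda>_. lborel) \<rightarrow>\<^sub>M Ms \<Otimes>\<^sub>M count_space UNIV"
proof (induction k)
  case 0
  then show ?case
    using s0_space by (simp add: space_pair_measure)
next
  case (Suc k)
  have "{1..k} \<subseteq> K" and "Suc k \<in> K"
    using Suc.prems by auto
  note Suc.IH[OF this(1), measurable] measurable_dpcrowd_step[measurable]
  show ?case
    unfolding dpcrowd_state_Suc using \<open>Suc k \<in> K\<close> by measurable
qed

lemma measurable_dpcrowd_correction:
  "dpcrowd_correction S S' t \<in> borel_measurable (PiM {1..<t} (\<lambda>_. lborel))"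
proof -
  have [measurable]: "(\<lambda>v. state S v (t - 1)) \<in> PiM {1..<t} (\<lambda>_. lborel) \<rightarrow>\<^sub>M Ms \<Otimes>\<^sub>M count_space UNIV"
    by (rule measurable_dpcrowd_state) auto
  show ?thesis
    unfolding dpcrowd_correction_def by measurable
qed

lemma measurable_dpcrowd_output:
  assumes [measurable]: "outp \<in> Ms \<rightarrow>\<^sub>M Mo"
  shows "dpcrowd_output samp upd_s upd_n s0 outp T Ts f S \<in> PiM {1..T} (\<lambda>_. lborel) \<rightarrow>\<^sub>M PiM {1..T} (\<lambda>_. Mo)"
  unfolding dpcrowd_output_def
proof (rule measurable_restrict)
  fix t assume "t \<in> {1..T}"
  then have [measurable]: "(\<lambda>v. state S v t) \<in> PiM {1..T} (\<lambda>_. lborel) \<rightarrow>\<^sub>M Ms \<Otimes>\<^sub>M count_space UNIV"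
    by (intro measurable_dpcrowd_state) auto
  show "(\<lambda>v. outp (fst (state S v t))) \<in> PiM {1..T} (\<lambda>_. lborel) \<rightarrow>\<^sub>M Mo"
    by measurable
qed

end

end

lemma user_neighbors_diff_le_sensitivity:
  assumes "bdd_above {\<bar>f D - f D'\<bar> | D D'. db_neighbors D D'}"
    and "user_neighbors T S S'" and "t \<in> {1..T}"
  shows "\<bar>f (S t) - f (S' t)\<bar> \<le> sensitivity f"
proof -
  have "db_neighbors (S t) (S' t)"
    using assms(2,3) unfolding user_neighbors_def valid_stream_def db_neighbors_def by blast
  then show ?thesis
    unfolding sensitivity_def using assms(1) by (intro cSup_upper) blast+
qed

theorem theorem4:
  fixes T Ts :: nat and \<epsilon> \<Delta>f :: real
    and f :: "('u, 'r) db \<Rightarrow> real"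
    and Ms :: "'s measure" and Mo :: "'o measure"
    and samp :: "nat \<Rightarrow> 's \<Rightarrow> bool" and upd_s :: "nat \<Rightarrow> 's \<Rightarrow> real \<Rightarrow> 's"
    and upd_n :: "nat \<Rightarrow> 's \<Rightarrow> 's" and s0 :: 's and outp :: "'s \<Rightarrow> 'o"
    and S S' :: "nat \<Rightarrow> ('u, 'r) db" and Ev :: "(nat \<Rightarrow> 'o) set"
  assumes eps: "\<epsilon> > 0"
    and Ts: "Ts > 0"
    and sens_bdd: "bdd_above {\<bar>f D - f D'\<bar> | D D'. db_neighbors D D'}"
    and sens: "\<Delta>f = sensitivity f"
    and sens_pos: "\<Delta>f > 0"
    and s0: "s0 \<in> space Ms"
    and samp_meas: "\<And>t. {s \<in> space Ms. samp t s} \<in> sets Ms"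
    and upd_s_meas: "\<And>t. (\<lambda>(s, z). upd_s t s z) \<in> Ms \<Otimes>\<^sub>M borel \<rightarrow>\<^sub>M Ms"
    and upd_n_meas: "\<And>t. upd_n t \<in> Ms \<rightarrow>\<^sub>M Ms"
    and outp_meas: "outp \<in> Ms \<rightarrow>\<^sub>M Mo"
    and nb: "user_neighbors T S S'"
    and Ev: "Ev \<in> sets (PiM {1..T} (\<lambda>_. Mo))"
  shows "dpcrowd_prob samp upd_s upd_n s0 outp T Ts \<epsilon> \<Delta>f f S Ev
         \<le> exp \<epsilon> * dpcrowd_prob samp upd_s upd_n s0 outp T Ts \<epsilon> \<Delta>f f S' Ev"
proof -
  define b where "b = \<Delta>f * real Ts / \<epsilon>"
  have b: "0 < b"
    using eps Ts sens_pos by (simp add: b_def)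
  let ?N = "noise_space T b"
  let ?out = "dpcrowd_output samp upd_s upd_n s0 outp T Ts f"
  let ?d = "dpcrowd_correction samp upd_s upd_n s0 Ts f S S'"
  have d: "?d t \<in> borel_measurable (PiM {1..<t} (\<lambda>_. lborel))" for t
    using samp_meas upd_s_meas upd_n_meas s0 by (rule measurable_dpcrowd_correction)
  have space_N: "space ?N = space (PiM {1..T} (\<lambda>_. lborel))"
    using b by (simp add: noise_space_eq_density)
  have diff: "\<bar>f (S t) - f (S' t)\<bar> \<le> \<Delta>f" if "t \<in> {1..T}" for t
    using user_neighbors_diff_le_sensitivity[OF sens_bdd nb that] sens by simp
  have "\<Delta>f * real Ts / b = \<epsilon>"
    using eps Ts sens_pos by (simp add: b_def)
  with prod_laplace_density_le_causal_shift[where T=T and S=S and S'=S' and f=f and Ts=Ts,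
      OF diff less_imp_le[OF sens_pos] b]
  have ratio: "(\<Prod>t\<in>{1..T}. ennreal (laplace_density b (v t)))
      \<le> ennreal (exp \<epsilon>) * (\<Prod>t\<in>{1..T}. ennreal (laplace_density b (causal_shift ?d T v t)))" for v
    by simp
  have event: "{v \<in> space ?N. ?out S v \<in> Ev} = causal_shift ?d T -` {v \<in> space ?N. ?out S' v \<in> Ev} \<inter> space ?N"
    using measurable_space[OF measurable_causal_shift[OF d]]
    by (auto simp: space_N dpcrowd_output_causal_shift[where S=S and S'=S'])
  have "{v \<in> space ?N. ?out S' v \<in> Ev} \<in> sets (PiM {1..T} (\<lambda>_. lborel))"
    using measurable_dpcrowd_output[OF samp_meas upd_s_meas upd_n_meas s0 outp_meas] Ev
    unfolding space_N by measurable
  then show ?thesis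
    unfolding dpcrowd_prob_def b_def[symmetric] event
    by (intro measure_noise_space_causal_shift_le[OF b d ratio]) simp_all
qed

end
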